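(* For a Borel probability measure $\pi$ on $[0,1]$ let $V_\infty(\pi)=\pi((1/2,1])+\tfrac12\pi(\{1/2\})$. For feasible $(\mu,\nu)$ (i.e. $0\le\mu\le1$, $\mu^2\le\nu\le\mu$) let $U_\infty(\mu,\nu)=\sup_{\pi\in\mathcal M(\mu,\nu)}V_\infty(\pi)$ and $L_\infty(\mu,\nu)=\inf_{\pi\in\mathcal M(\mu,\nu)}V_\infty(\pi)$. Define $G(1/2,1/4)=1/2$ and, for every other feasible $(\mu,\nu)$, \[ G(\mu,\nu)=\begin{cases}\dfrac{\nu-\mu^2}{\nu+1/4-\mu},&\mu\le1/2\text{ and }\nu\le\mu/2,\\[6pt] \min\{1,\,3\mu-2\nu\},&\text{otherwise}.\end{cases} \] Then for every feasible $(\mu,\nu)$, $U_\infty(\mu,\nu)=G(\mu,\nu)$ and $L_\infty(\mu,\nu)=1-G(1-\mu,\,1-2\mu+\nu)$.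
   Context: $\mathcal M(\mu,\nu)$ denotes the set of Borel probability measures $\pi$ on $[0,1]$ with $\int q\,d\pi(q)=\mu$ and $\int q^2\,d\pi(q)=\nu$. (The supremum and infimum need not be attained.) *)

theory Defs
  imports "HOL-Probability.Probability"
begin

definition Mset :: "real \<Rightarrow> real \<Rightarrow> real measure set" where
  "Mset \<mu> \<nu> = {M. sets M = sets (restrict_space borel {0..1}) \<and> prob_space M \<and>
      (\<integral>q. q \<partial>M) = \<mu> \<and> (\<integral>q. q\<^sup>2 \<partial>M) = \<nu>}"

definition V_inf :: "real measure \<Rightarrow> real" where
  "V_inf M = measure M {1/2<..1} + 1/2 * measure M {1/2}"

definition feasible :: "real \<Rightarrow> real \<Rightarrow> bool" where
  "feasible \<mu> \<nu> \<longleftrightarrow> 0 \<le> \<mu> \<and> \<mu> \<le> 1 \<and> \<mu>\<^sup>2 \<le> \<nu> \<and> \<nu> \<le> \<mu>"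

definition U_inf :: "real \<Rightarrow> real \<Rightarrow> real" where
  "U_inf \<mu> \<nu> = (SUP M\<in>Mset \<mu> \<nu>. V_inf M)"

definition L_inf :: "real \<Rightarrow> real \<Rightarrow> real" where
  "L_inf \<mu> \<nu> = (INF M\<in>Mset \<mu> \<nu>. V_inf M)"

definition G :: "real \<Rightarrow> real \<Rightarrow> real" where
  "G \<mu> \<nu> = (if \<mu> = 1/2 \<and> \<nu> = 1/4 then 1/2
     else if \<mu> \<le> 1/2 \<and> \<nu> \<le> \<mu>/2 then (\<nu> - \<mu>\<^sup>2) / (\<nu> + 1/4 - \<mu>)
     else min 1 (3*\<mu> - 2*\<nu>))"

end

(*
  V_inf M is the integral of the step function h that is 1 on (1/2, 1], 1/2 at 1/2 and 0
  below, so every quadratic majorant a + b q + c q^2 of h on [0, 1] bounds V_inf by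
  a + b mu + c nu.  Three majorants suffice: the constant 1, the parabola 3 q - 2 q^2
  (which meets h at 0, at 1 and just right of 1/2) and, for mu < 1/2, the one-sided
  Chebyshev (Cantelli) parabola.  The bounds are approached by laws on two points a < 1/2 < b
  or on the three points 0, b, 1 as b decreases to 1/2; the point (1/2, 1/4) is degenerate
  because only the point mass at 1/2 has these moments.  The reflection q -> 1 - q maps
  M(mu, nu) onto M(1 - mu, 1 - 2 mu + nu) and V_inf to 1 - V_inf, which turns the supremum
  into the infimum.
*)
theory Submission
  imports Defs
begin

definition half_step :: "real \<Rightarrow> real" where
  "half_step q = indicator {1/2<..1} q + 1/2 * indicator {1/2} q"

lemma half_step_borel [measurable]: "half_step \<in> borel_measurable borel"
  unfolding half_step_def by measurable

lemma half_step_unit_interval: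
  "q \<in> {0..1} \<Longrightarrow> half_step q = (if 1/2 < q then 1 else if q = 1/2 then 1/2 else 0)"
  by (auto simp: half_step_def indicator_def)

lemma half_step_reflect: "q \<in> {0..1} \<Longrightarrow> half_step (1 - q) = 1 - half_step q"
  by (auto simp: half_step_def indicator_def)

abbreviation unit_interval :: "real measure" where
  "unit_interval \<equiv> restrict_space borel {0..1}"

lemma space_eq_unit_interval:
  "sets M = sets unit_interval \<Longrightarrow> space M = {0..1}"
  using sets_eq_imp_space_eq[of M unit_interval] by (simp add: space_restrict_space)

lemma borel_measurable_unit_interval:
  "f \<in> borel_measurable borel \<Longrightarrow> sets M = sets unit_interval \<Longrightarrow> f \<in> borel_measurable M"
  using measurable_cong_sets[of M unit_interval borel borel] measurable_restrict_space1
  by blast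

lemma integrable_unit_interval:
  fixes f :: "real \<Rightarrow> real"
  assumes "finite_measure M" "sets M = sets unit_interval" "f \<in> borel_measurable borel"
    and "\<And>q. q \<in> {0..1} \<Longrightarrow> \<bar>f q\<bar> \<le> B"
  shows "integrable M f"
  using assms space_eq_unit_interval[OF assms(2)] borel_measurable_unit_interval[OF assms(3,2)]
  by (intro finite_measure.integrable_const_bound[of M _ B]) (auto intro!: AE_I2)

lemma integrable_half_step:
  "finite_measure M \<Longrightarrow> sets M = sets unit_interval \<Longrightarrow> integrable M half_step"
  by (rule integrable_unit_interval[of _ _ 1]) (auto simp: half_step_unit_interval)

lemma V_inf_eq_integral:
  assumes "finite_measure M" "sets M = sets unit_interval"
  shows "V_inf M = (\<integral>q. half_step q \<partial>M)"
proof -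
  have "(\<integral>q. half_step q \<partial>M) =
      (\<integral>q. indicator {1/2<..1} q \<partial>M) + (\<integral>q. 1/2 * indicator {1/2} q \<partial>M)"
    unfolding half_step_def
    by (intro Bochner_Integration.integral_add integrable_unit_interval[OF assms, of _ 1])
       (auto simp: indicator_def)
  then show ?thesis
    using space_eq_unit_interval[OF assms(2)] by (simp add: V_inf_def Int_absorb2 subset_eq)
qed

lemma MsetD:
  assumes "M \<in> Mset \<mu> \<nu>"
  shows "prob_space M" "finite_measure M" "sets M = sets unit_interval" "space M = {0..1}"
    "(\<integral>q. q \<partial>M) = \<mu>" "(\<integral>q. q\<^sup>2 \<partial>M) = \<nu>"
  using assms space_eq_unit_interval unfolding Mset_def prob_space_def by auto

lemma Mset_integral_quadratic:
  assumes "M \<in> Mset \<mu> \<nu>"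
  shows "(\<integral>q. a + b * q + c * q\<^sup>2 \<partial>M) = a + b * \<mu> + c * \<nu>"
proof -
  note M = MsetD[OF assms]
  have "integrable M (\<lambda>q. q)" "integrable M (\<lambda>q. q\<^sup>2)"
    by (auto intro!: integrable_unit_interval[OF M(2,3), of _ 1] simp: abs_square_le_1)
  moreover have "integrable M (\<lambda>q. a)"
    using M(2) by (rule finite_measure.integrable_const)
  ultimately have "(\<integral>q. a + b * q + c * q\<^sup>2 \<partial>M) =
      (\<integral>q. a \<partial>M) + b * (\<integral>q. q \<partial>M) + c * (\<integral>q. q\<^sup>2 \<partial>M)"
    by (simp add: Bochner_Integration.integral_add)
  then show ?thesis
    using M(1,5,6) by (simp add: prob_space.prob_space)
qed

lemma V_inf_le_quadratic:
  assumes "M \<in> Mset \<mu> \<nu>" "\<And>q. q \<in> {0..1} \<Longrightarrow> half_step q \<le> a + b * q + c * q\<^sup>2"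
  shows "V_inf M \<le> a + b * \<mu> + c * \<nu>"
proof -
  note M = MsetD[OF assms(1)]
  have bound: "\<bar>a + b * q + c * q\<^sup>2\<bar> \<le> \<bar>a\<bar> + \<bar>b\<bar> + \<bar>c\<bar>" if "q \<in> {0..1}" for q
  proof -
    have "\<bar>b * q\<bar> \<le> \<bar>b\<bar>" "\<bar>c * q\<^sup>2\<bar> \<le> \<bar>c\<bar>"
      using that by (auto simp: abs_mult mult_left_le power_le_one)
    then show ?thesis by linarith
  qed
  have "V_inf M = (\<integral>q. half_step q \<partial>M)"
    by (rule V_inf_eq_integral[OF M(2,3)])
  also have "\<dots> \<le> (\<integral>q. a + b * q + c * q\<^sup>2 \<partial>M)"
  proof (rule integral_mono)
    show "integrable M half_step"
      by (rule integrable_half_step[OF M(2,3)])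
    show "integrable M (\<lambda>q. a + b * q + c * q\<^sup>2)"
      using bound by (intro integrable_unit_interval[OF M(2,3)]) simp_all
  qed (use assms(2) M(4) in auto)
  also have "\<dots> = a + b * \<mu> + c * \<nu>"
    by (rule Mset_integral_quadratic[OF assms(1)])
  finally show ?thesis .
qed

lemma V_inf_half_quarter:
  assumes "M \<in> Mset (1/2) (1/4)"
  shows "V_inf M = 1/2"
proof -
  note M = MsetD[OF assms]
  \<comment> \<open>zero variance: \<open>M\<close> is the point mass at \<open>1/2\<close>\<close>
  have "(\<integral>q. (q - 1/2)\<^sup>2 \<partial>M) = (\<integral>q. 1/4 + (-1) * q + 1 * q\<^sup>2 \<partial>M)"
    by (simp add: power2_eq_square algebra_simps)
  also have "\<dots> = 0"
    using Mset_integral_quadratic[OF assms, of "1/4" "-1" 1] by simp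
  finally have "(\<integral>q. (q - 1/2)\<^sup>2 \<partial>M) = 0" .
  moreover have "integrable M (\<lambda>q. (q - 1/2)\<^sup>2)"
    by (rule integrable_unit_interval[OF M(2,3), of _ 1]) (auto simp: abs_square_le_1)
  ultimately have "AE q in M. (q - 1/2)\<^sup>2 = 0"
    by (subst integral_nonneg_eq_0_iff_AE[symmetric]) auto
  then have "AE q in M. half_step q = 1/2"
    by (rule AE_mp) (auto intro!: AE_I2 simp: half_step_def)
  then have "(\<integral>q. half_step q \<partial>M) = (\<integral>q. 1/2 \<partial>M)"
    using borel_measurable_unit_interval[OF half_step_borel M(3)] by (intro integral_cong_AE) auto
  then show ?thesis
    using V_inf_eq_integral[OF M(2,3)] M(1) by (simp add: prob_space.prob_space)
qed

definition reflect_measure :: "real measure \<Rightarrow> real measure" where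
  "reflect_measure M = distr M unit_interval (\<lambda>q. 1 - q)"

lemma
  assumes "M \<in> Mset \<mu> \<nu>"
  shows reflect_measure_Mset: "reflect_measure M \<in> Mset (1 - \<mu>) (1 - 2 * \<mu> + \<nu>)"
    and V_inf_reflect_measure: "V_inf (reflect_measure M) = 1 - V_inf M"
proof -
  note M = MsetD[OF assms]
  have reflect: "(\<lambda>q::real. 1 - q) \<in> M \<rightarrow>\<^sub>M unit_interval"
    using M(4) by (intro measurable_restrict_space2 borel_measurable_unit_interval[OF _ M(3)]) auto
  have sets: "sets (reflect_measure M) = sets unit_interval"
    by (simp add: reflect_measure_def)
  have prob: "prob_space (reflect_measure M)"
    unfolding reflect_measure_def by (rule prob_space.prob_space_distr[OF M(1) reflect])
  have integral: "(\<integral>q. f q \<partial>reflect_measure M) = (\<integral>q. f (1 - q) \<partial>M)"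
    if "f \<in> borel_measurable borel" for f :: "real \<Rightarrow> real"
    unfolding reflect_measure_def
    by (rule integral_distr[OF reflect measurable_restrict_space1[OF that]])
  have "(\<integral>q. q \<partial>reflect_measure M) = 1 - \<mu>"
    using integral[of "\<lambda>q. q"] Mset_integral_quadratic[OF assms, of 1 "-1" 0] by simp
  moreover have "(\<integral>q. q\<^sup>2 \<partial>reflect_measure M) = 1 - 2 * \<mu> + \<nu>"
    using integral[of "\<lambda>q. q\<^sup>2"] Mset_integral_quadratic[OF assms, of 1 "-2" 1]
    by (simp add: power2_eq_square algebra_simps)
  ultimately show "reflect_measure M \<in> Mset (1 - \<mu>) (1 - 2 * \<mu> + \<nu>)"
    unfolding Mset_def using sets prob by blast
  have "V_inf (reflect_measure M) = (\<integral>q. half_step (1 - q) \<partial>M)"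
    using V_inf_eq_integral[OF _ sets] prob integral[OF half_step_borel]
    by (simp add: prob_space_def)
  also have "\<dots> = (\<integral>q. 1 - half_step q \<partial>M)"
    using M(4) by (intro Bochner_Integration.integral_cong) (simp_all add: half_step_reflect)
  also have "\<dots> = 1 - V_inf M"
    using M(1,2) V_inf_eq_integral[OF M(2,3)] integrable_half_step[OF M(2,3)]
    by (simp add: Bochner_Integration.integral_diff finite_measure.integrable_const
        prob_space.prob_space)
  finally show "V_inf (reflect_measure M) = 1 - V_inf M" .
qed

lemma three_point_Mset:
  fixes x y z :: real
  assumes "distinct [x, y, z]" "{x, y, z} \<subseteq> {0..1}"
    and "0 \<le> wx" "0 \<le> wy" "0 \<le> wz" "wx + wy + wz = 1"
  shows "\<exists>M \<in> Mset (wx * x + wy * y + wz * z) (wx * x\<^sup>2 + wy * y\<^sup>2 + wz * z\<^sup>2).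
    V_inf M = wx * half_step x + wy * half_step y + wz * half_step z"
proof -
  define p where "p = pmf_of_list [(x, wx), (y, wy), (z, wz)]"
  have wf: "pmf_of_list_wf [(x, wx), (y, wy), (z, wz)]"
    using assms by (auto intro!: pmf_of_list_wfI)
  have pmf: "pmf p x = wx" "pmf p y = wy" "pmf p z = wz"
    using assms(1) by (auto simp: p_def pmf_pmf_of_list[OF wf])
  have support: "set_pmf p \<subseteq> {x, y, z}"
    using set_pmf_of_list[OF wf] by (simp add: p_def)
  \<comment> \<open>clamping is the identity on the support; it only makes the map land in \<open>[0,1]\<close>\<close>
  define clamp :: "real \<Rightarrow> real" where "clamp q = max 0 (min 1 q)" for q
  define M where "M = distr (measure_pmf p) unit_interval clamp"
  have clamp: "clamp \<in> measure_pmf p \<rightarrow>\<^sub>M unit_interval"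
    by (simp add: space_restrict_space clamp_def)
  have sets: "sets M = sets unit_interval"
    by (simp add: M_def)
  have prob: "prob_space M"
    unfolding M_def by (rule prob_space.prob_space_distr[OF prob_space_measure_pmf clamp])
  have integral: "(\<integral>q. f q \<partial>M) = wx * f x + wy * f y + wz * f z"
    if "f \<in> borel_measurable borel" for f :: "real \<Rightarrow> real"
  proof -
    have "(\<integral>q. f q \<partial>M) = (\<integral>q. f (clamp q) \<partial>measure_pmf p)"
      unfolding M_def by (rule integral_distr[OF clamp measurable_restrict_space1[OF that]])
    also have "\<dots> = (\<Sum>a\<in>{x, y, z}. f (clamp a) * pmf p a)"
      using support by (intro integral_measure_pmf_real) auto
    also have "\<dots> = wx * f x + wy * f y + wz * f z"
      using assms(1,2) pmf by (simp add: clamp_def)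
    finally show ?thesis .
  qed
  show ?thesis
  proof
    show "M \<in> Mset (wx * x + wy * y + wz * z) (wx * x\<^sup>2 + wy * y\<^sup>2 + wz * z\<^sup>2)"
      unfolding Mset_def using sets prob integral[of "\<lambda>q. q"] integral[of "\<lambda>q. q\<^sup>2"] by simp
    show "V_inf M = wx * half_step x + wy * half_step y + wz * half_step z"
      using V_inf_eq_integral[OF _ sets] prob integral[OF half_step_borel]
      by (simp add: prob_space_def)
  qed
qed

lemma exists_V_inf_two_point:
  assumes "1/2 < b" "b < 1" "0 \<le> \<mu>" "\<mu> < 1/2" "\<mu>\<^sup>2 \<le> \<nu>" "\<nu> \<le> \<mu>/2"
  shows "\<exists>M \<in> Mset \<mu> \<nu>. V_inf M = (\<nu> - \<mu>\<^sup>2) / (\<nu> - \<mu>\<^sup>2 + (b - \<mu>)\<^sup>2)"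
proof -
  \<comment> \<open>the two-point law on \<open>{a, b}\<close> with mean \<open>\<mu>\<close>; \<open>a\<close> is chosen to make its second moment \<open>\<nu>\<close>\<close>
  define a where "a = (\<mu> * b - \<nu>) / (b - \<mu>)"
  define wa where "wa = (b - \<mu>) / (b - a)"
  define wb where "wb = (\<mu> - a) / (b - a)"
  have gap: "0 < b - \<mu>"
    using assms(1,4) by simp
  have "\<mu> * (1/2) \<le> \<mu> * b"
    using assms(1,3) by (intro mult_left_mono) simp_all
  then have "\<nu> \<le> \<mu> * b"
    using assms(6) by simp
  then have a: "0 \<le> a" "a \<le> \<mu>"
    using gap assms(5) by (simp_all add: a_def divide_le_eq power2_eq_square algebra_simps)
  have a_eq: "a * (b - \<mu>) = \<mu> * b - \<nu>"
    using gap by (simp add: a_def)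
  have ba: "0 < b - a"
    using a assms(1,4) by simp
  have w: "0 \<le> wa" "0 \<le> wb" "wa + wb + 0 = 1"
    using gap a ba by (simp_all add: wa_def wb_def add_divide_distrib[symmetric])
  have mean: "wa * a + wb * b + 0 * 1 = \<mu>"
    and "wa * a\<^sup>2 + wb * b\<^sup>2 = \<mu> * (a + b) - a * b"
    using ba by (simp_all add: wa_def wb_def divide_simps, simp_all add: power2_eq_square algebra_simps)
  then have second: "wa * a\<^sup>2 + wb * b\<^sup>2 + 0 * 1\<^sup>2 = \<nu>"
    using a_eq by (simp add: algebra_simps)
  have "\<mu> - a = (\<nu> - \<mu>\<^sup>2) / (b - \<mu>)" "b - a = (\<nu> - \<mu>\<^sup>2 + (b - \<mu>)\<^sup>2) / (b - \<mu>)"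
    using gap by (simp_all add: a_def field_simps power2_eq_square)
  then have mass_above_half: "wb = (\<nu> - \<mu>\<^sup>2) / (\<nu> - \<mu>\<^sup>2 + (b - \<mu>)\<^sup>2)"
    using gap by (simp add: wb_def)
  show ?thesis
    using three_point_Mset[of a b 1 wa wb 0] a w assms(1,2,4) mean second mass_above_half
    by (simp add: half_step_unit_interval)
qed

lemma exists_V_inf_three_point:
  assumes "1/2 < b" "b < 1" "\<mu> * b \<le> \<nu>" "\<nu> \<le> \<mu>" "\<mu> + (\<mu> - \<nu>) / b \<le> 1"
  shows "\<exists>M \<in> Mset \<mu> \<nu>. V_inf M = \<mu> + (\<mu> - \<nu>) / b"
proof -
  define w0 where "w0 = 1 - \<mu> - (\<mu> - \<nu>) / b"
  define wb where "wb = (\<mu> - \<nu>) / b + (\<mu> - \<nu>) / (1 - b)"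
  define w1 where "w1 = (\<nu> - \<mu> * b) / (1 - b)"
  have b: "b \<noteq> 0" "1 - b \<noteq> 0"
    using assms(1,2) by simp_all
  have moments: "w0 * 0 + wb * b + w1 * 1 = \<mu>" "w0 * 0\<^sup>2 + wb * b\<^sup>2 + w1 * 1\<^sup>2 = \<nu>"
    and mass_above_half: "wb + w1 = \<mu> + (\<mu> - \<nu>) / b"
    and total: "w0 + wb + w1 = 1"
    using b by (simp_all add: w0_def wb_def w1_def divide_simps, algebra+)
  have nonneg: "0 \<le> w0" "0 \<le> wb" "0 \<le> w1"
    using assms by (simp_all add: w0_def wb_def w1_def)
  show ?thesis
    using three_point_Mset[of 0 b 1 w0 wb w1] nonneg total assms(1,2) moments mass_above_half
    by (simp add: half_step_unit_interval)
qed

lemma G_cases: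
  assumes "feasible \<mu> \<nu>"
  obtains "\<mu> = 1/2" "\<nu> = 1/4" "G \<mu> \<nu> = 1/2"
  | "\<mu> < 1/2" "\<nu> \<le> \<mu>/2" "G \<mu> \<nu> = (\<nu> - \<mu>\<^sup>2) / (\<nu> - \<mu>\<^sup>2 + (1/2 - \<mu>)\<^sup>2)"
  | "\<mu>/2 < \<nu>" "G \<mu> \<nu> = min 1 (3 * \<mu> - 2 * \<nu>)"
proof -
  have f: "0 \<le> \<mu>" "\<mu>\<^sup>2 \<le> \<nu>" "\<nu> \<le> \<mu>"
    using assms by (simp_all add: feasible_def)
  consider "\<mu> = 1/2 \<and> \<nu> = 1/4" | "\<mu> < 1/2" "\<nu> \<le> \<mu>/2" | "\<mu>/2 < \<nu>"
  proof (cases "\<mu> < 1/2")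
    case False
    show ?thesis
    proof (cases "\<mu> = 1/2")
      case True
      then show ?thesis
        using that f(2) by (fastforce simp: power2_eq_square)
    next
      case False
      then have "\<mu> * (1/2) < \<mu> * \<mu>"
        using \<open>\<not> \<mu> < 1/2\<close> by (intro mult_strict_left_mono) simp_all
      then show ?thesis
        using that f(2) by (simp add: power2_eq_square)
    qed
  qed (use that in force)
  then show ?thesis
    by cases (use that in \<open>auto simp: G_def power2_eq_square algebra_simps\<close>)
qed

lemma V_inf_le_Cantelli:
  assumes "M \<in> Mset \<mu> \<nu>" "\<mu> < 1/2" "\<mu>\<^sup>2 \<le> \<nu>"
  shows "V_inf M \<le> (\<nu> - \<mu>\<^sup>2) / (\<nu> - \<mu>\<^sup>2 + (1/2 - \<mu>)\<^sup>2)"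
proof -
  define \<sigma> where "\<sigma> = \<nu> - \<mu>\<^sup>2"
  define d where "d = 1/2 - \<mu>"
  define D where "D = \<sigma> + d\<^sup>2"
  \<comment> \<open>the parabola \<open>(x q + y)\<^sup>2\<close> equals 1 at \<open>q = 1/2\<close> and vanishes at \<open>q = \<mu> - \<sigma> / d\<close>,
      the two atoms of the limiting extremal law\<close>
  define x where "x = d / D"
  define y where "y = (\<sigma> - \<mu> * d) / D"
  have d: "0 < d" and D: "0 < D"
    using assms(2,3) by (simp_all add: d_def D_def \<sigma>_def add_nonneg_pos)
  have square: "y\<^sup>2 + (2 * x * y) * q + x\<^sup>2 * q\<^sup>2 = (x * q + y)\<^sup>2" for q
    by (simp add: power2_eq_square algebra_simps)
  have "half_step q \<le> y\<^sup>2 + (2 * x * y) * q + x\<^sup>2 * q\<^sup>2" if q: "q \<in> {0..1}" for q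
  proof (cases "1/2 \<le> q")
    case True
    have "d * d \<le> (q - \<mu>) * d"
      using True d by (intro mult_right_mono) (simp_all add: d_def)
    then have "D \<le> d * q + (\<sigma> - \<mu> * d)"
      by (simp add: D_def power2_eq_square algebra_simps)
    then have "1 \<le> x * q + y"
      using D by (simp add: x_def y_def add_divide_distrib[symmetric] le_divide_eq)
    then have "1 \<le> (x * q + y)\<^sup>2"
      by (simp add: one_le_power)
    moreover have "half_step q \<le> 1"
      using q by (simp add: half_step_unit_interval)
    ultimately show ?thesis
      unfolding square by linarith
  next
    case False
    then show ?thesis
      using q unfolding square by (simp add: half_step_unit_interval)
  qed
  then have "V_inf M \<le> y\<^sup>2 + (2 * x * y) * \<mu> + x\<^sup>2 * \<nu>"
    by (rule V_inf_le_quadratic[OF assms(1)])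
  also have "\<dots> = ((\<sigma> - \<mu> * d)\<^sup>2 + 2 * d * (\<sigma> - \<mu> * d) * \<mu> + d\<^sup>2 * \<nu>) / D\<^sup>2"
    by (simp add: x_def y_def power_divide add_divide_distrib) (simp add: power2_eq_square)
  also have "(\<sigma> - \<mu> * d)\<^sup>2 + 2 * d * (\<sigma> - \<mu> * d) * \<mu> + d\<^sup>2 * \<nu> = \<sigma> * D"
    by (simp add: D_def \<sigma>_def power2_eq_square algebra_simps)
  finally show ?thesis
    using D by (simp add: power2_eq_square \<sigma>_def D_def d_def)
qed

lemma V_inf_le_G:
  assumes "feasible \<mu> \<nu>" "M \<in> Mset \<mu> \<nu>"
  shows "V_inf M \<le> G \<mu> \<nu>"
  using assms(1)
proof (cases rule: G_cases)
  case 1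
  have "M \<in> Mset (1/2) (1/4)"
    using assms(2) unfolding 1(1,2) .
  then show ?thesis
    using 1(3) by (simp add: V_inf_half_quarter)
next
  case 2
  then show ?thesis
    using V_inf_le_Cantelli assms by (simp add: feasible_def)
next
  case 3
  have "V_inf M \<le> 1"
    using V_inf_le_quadratic[OF assms(2), of 1 0 0] by (simp add: half_step_unit_interval)
  moreover have "half_step q \<le> 0 + 3 * q + (-2) * q\<^sup>2" if "q \<in> {0..1}" for q
  proof -
    have "0 \<le> q * (3 - 2 * q)" "1/2 < q \<Longrightarrow> 0 \<le> (2 * q - 1) * (1 - q)"
      using that by simp_all
    then show ?thesis
      using that by (auto simp: half_step_unit_interval power2_eq_square algebra_simps)
  qed
  then have "V_inf M \<le> 3 * \<mu> - 2 * \<nu>"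
    using V_inf_le_quadratic[OF assms(2)] by fastforce
  ultimately show ?thesis
    using 3 by simp
qed

lemma exists_gt_at_right:
  fixes \<phi> :: "real \<Rightarrow> real"
  assumes "(\<phi> \<longlongrightarrow> L) (at_right a)" "y < L" "a < c"
  obtains b where "a < b" "b < c" "y < \<phi> b"
proof -
  obtain b' where b': "a < b'" "\<And>z. a < z \<Longrightarrow> z < b' \<Longrightarrow> y < \<phi> z"
    using order_tendstoD(1)[OF assms(1,2)] by (auto simp: eventually_at_right_field)
  show ?thesis
    using that[of "(a + min b' c) / 2"] b' assms(3) by simp
qed

lemma exists_V_inf_gt_Cantelli:
  assumes "feasible \<mu> \<nu>" "\<mu> < 1/2" "\<nu> \<le> \<mu>/2"
    and "y < (\<nu> - \<mu>\<^sup>2) / (\<nu> - \<mu>\<^sup>2 + (1/2 - \<mu>)\<^sup>2)"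
  shows "\<exists>M \<in> Mset \<mu> \<nu>. y < V_inf M"
proof -
  define \<phi> where "\<phi> b = (\<nu> - \<mu>\<^sup>2) / (\<nu> - \<mu>\<^sup>2 + (b - \<mu>)\<^sup>2)" for b
  have "0 < \<nu> - \<mu>\<^sup>2 + (1/2 - \<mu>)\<^sup>2"
    using assms(1,2) by (simp add: feasible_def add_nonneg_pos)
  then have "(\<phi> \<longlongrightarrow> \<phi> (1/2)) (at_right (1/2))"
    unfolding \<phi>_def by (intro tendsto_intros) simp_all
  moreover have "y < \<phi> (1/2)"
    using assms(4) by (simp add: \<phi>_def)
  ultimately obtain b where b: "1/2 < b" "b < 1" "y < \<phi> b"
    by (rule exists_gt_at_right[where c = 1]) auto
  moreover have "\<exists>M \<in> Mset \<mu> \<nu>. V_inf M = \<phi> b"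
    unfolding \<phi>_def using exists_V_inf_two_point b(1,2) assms(1-3) by (simp add: feasible_def)
  ultimately show ?thesis
    by force
qed

lemma exists_V_inf_gt_three_point:
  assumes "feasible \<mu> \<nu>" "\<mu>/2 < \<nu>" "y < min 1 (3 * \<mu> - 2 * \<nu>)"
  shows "\<exists>M \<in> Mset \<mu> \<nu>. y < V_inf M"
proof -
  have f: "0 \<le> \<mu>" "\<mu> \<le> 1" "\<mu>\<^sup>2 \<le> \<nu>" "\<nu> \<le> \<mu>"
    using assms(1) by (simp_all add: feasible_def)
  have "0 < \<mu>"
    using assms(2) f by simp
  show ?thesis
  proof (cases "3 * \<mu> - 2 * \<nu> \<le> 1")
    case True
    define \<phi> where "\<phi> b = \<mu> + (\<mu> - \<nu>) / b" for b
    have "(\<phi> \<longlongrightarrow> \<phi> (1/2)) (at_right (1/2))"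
      unfolding \<phi>_def by (intro tendsto_intros) simp_all
    moreover have "y < \<phi> (1/2)"
      using assms(3) True by (simp add: \<phi>_def)
    moreover have "1/2 < min 1 (\<nu> / \<mu>)"
      using assms(2) \<open>0 < \<mu>\<close> by (simp add: less_divide_eq)
    ultimately obtain b where b: "1/2 < b" "b < min 1 (\<nu> / \<mu>)" "y < \<phi> b"
      by (rule exists_gt_at_right)
    have "\<mu> * b \<le> \<nu>"
      using b(2) \<open>0 < \<mu>\<close> by (simp add: less_divide_eq mult.commute)
    moreover have "(\<mu> - \<nu>) / b \<le> (\<mu> - \<nu>) / (1/2)"
      using b(1) f(4) by (intro divide_left_mono) simp_all
    ultimately have "\<exists>M \<in> Mset \<mu> \<nu>. V_inf M = \<phi> b"
      unfolding \<phi>_def using exists_V_inf_three_point b(1,2) f(4) True by simp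
    then show ?thesis
      using b(3) by force
  next
    case False
    \<comment> \<open>the three-point law with \<open>\<mu> + (\<mu> - \<nu>) / b = 1\<close> puts no mass at 0\<close>
    define b where "b = (\<mu> - \<nu>) / (1 - \<mu>)"
    have "\<mu> < 1"
      using False f by (cases "\<mu> = 1") (simp_all add: power2_eq_square)
    moreover have "0 < (1 - \<mu>)\<^sup>2"
      using \<open>\<mu> < 1\<close> by simp
    ultimately have "1/2 < b" "b < 1" "\<mu> * b \<le> \<nu>" "\<mu> + (\<mu> - \<nu>) / b = 1"
      using False f by (simp_all add: b_def field_simps power2_eq_square)
    then show ?thesis
      using exists_V_inf_three_point[of b \<mu> \<nu>] f(4) False assms(3) by force
  qed
qed

lemma exists_V_inf_gt_G:
  assumes "feasible \<mu> \<nu>" "y < G \<mu> \<nu>"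
  shows "\<exists>M \<in> Mset \<mu> \<nu>. y < V_inf M"
  using assms(1)
proof (cases rule: G_cases)
  case 1
  have "\<exists>M \<in> Mset (1 * (1/2) + 0 * 0 + 0 * 1) (1 * (1/2)\<^sup>2 + 0 * 0\<^sup>2 + 0 * 1\<^sup>2).
      V_inf M = 1 * half_step (1/2) + 0 * half_step 0 + 0 * half_step 1"
    by (rule three_point_Mset) auto
  then show ?thesis
    using assms(2) 1(3) unfolding 1(1,2) by (force simp: half_step_def power2_eq_square)
next
  case 2
  then show ?thesis
    using exists_V_inf_gt_Cantelli assms by simp
next
  case 3
  then show ?thesis
    using exists_V_inf_gt_three_point assms by simp
qed

lemma U_inf_eq_G:
  assumes "feasible \<mu> \<nu>"
  shows "U_inf \<mu> \<nu> = G \<mu> \<nu>"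
  unfolding U_inf_def
proof (rule cSup_eq)
  show "v \<le> G \<mu> \<nu>" if "v \<in> V_inf ` Mset \<mu> \<nu>" for v
    using that V_inf_le_G[OF assms] by blast
  show "G \<mu> \<nu> \<le> y" if upper: "\<And>v. v \<in> V_inf ` Mset \<mu> \<nu> \<Longrightarrow> v \<le> y" for y
  proof (rule ccontr)
    assume "\<not> G \<mu> \<nu> \<le> y"
    then obtain M where "M \<in> Mset \<mu> \<nu>" "y < V_inf M"
      using exists_V_inf_gt_G[OF assms] by force
    then show False
      using upper by force
  qed
qed

lemma feasible_reflect:
  assumes "feasible \<mu> \<nu>"
  shows "feasible (1 - \<mu>) (1 - 2 * \<mu> + \<nu>)"
  using assms unfolding feasible_def by (simp add: power2_eq_square algebra_simps)

lemma L_inf_eq_reflected_G: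
  assumes "feasible \<mu> \<nu>"
  shows "L_inf \<mu> \<nu> = 1 - G (1 - \<mu>) (1 - 2 * \<mu> + \<nu>)"
  unfolding L_inf_def
proof (rule cInf_eq)
  have feasible': "feasible (1 - \<mu>) (1 - 2 * \<mu> + \<nu>)"
    by (rule feasible_reflect[OF assms])
  show "1 - G (1 - \<mu>) (1 - 2 * \<mu> + \<nu>) \<le> v" if "v \<in> V_inf ` Mset \<mu> \<nu>" for v
    using that V_inf_le_G[OF feasible'] reflect_measure_Mset V_inf_reflect_measure by fastforce
  show "y \<le> 1 - G (1 - \<mu>) (1 - 2 * \<mu> + \<nu>)"
    if lower: "\<And>v. v \<in> V_inf ` Mset \<mu> \<nu> \<Longrightarrow> y \<le> v" for y
  proof (rule ccontr)
    assume "\<not> y \<le> 1 - G (1 - \<mu>) (1 - 2 * \<mu> + \<nu>)"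
    then obtain M where M: "M \<in> Mset (1 - \<mu>) (1 - 2 * \<mu> + \<nu>)" "1 - y < V_inf M"
      using exists_V_inf_gt_G[OF feasible'] by force
    have "reflect_measure M \<in> Mset \<mu> \<nu>"
      using reflect_measure_Mset[OF M(1)] by simp
    then show False
      using lower[of "V_inf (reflect_measure M)"] M(2) V_inf_reflect_measure[OF M(1)] by force
  qed
qed

theorem theorem3:
  fixes \<mu> \<nu> :: real
  assumes "feasible \<mu> \<nu>"
  shows "U_inf \<mu> \<nu> = G \<mu> \<nu> \<and> L_inf \<mu> \<nu> = 1 - G (1 - \<mu>) (1 - 2*\<mu> + \<nu>)"
  using U_inf_eq_G[OF assms] L_inf_eq_reflected_G[OF assms] by simp

end
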